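(* Let $m\ge 1$, $k\ge 2$ and $n\ge k-1$. Then $\dim W_{m,k}=\dim U_{m,k}$.
   Context: $mB^n=\{0,1,\ldots,m\}^n$. A polynomial has a zero of multiplicity at least $k$ at $\mathbf a$ if all its partial derivatives of order less than $k$ vanish at $\mathbf a$. For an integer $k\ge 2$, a polynomial $P\in\mathbb{R}[x_1,\ldots,x_n]$ is called $(m,k)$-reduced if two conditions hold: $\deg P\le mn+(m+1)(k-1)-1$, and no monomial of $P$ is divisible by $x_{i_1}^{m+1}\cdots x_{i_k}^{m+1}$ for any indices $i_1,\ldots,i_k$ (not necessarily distinct). $U_{m,k}$ is the space of $(m,k)$-reduced polynomials with a zero of multiplicity at least $k$ at every point of $mB^n\setminus\{\mathbf 0\}$. $W_{m,k}$ is the real span of all polynomials $(x_1\cdots x_n)^m(x_1^{l_1}\cdots x_n^{l_n})^{m+1}(x_1^d+\cdots+x_n^d)$ with $d,l_1,\ldots,l_n$ nonnegative integers and $d+(m+1)(l_1+\cdots+l_n)=(m+1)(k-1)-1$. *)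

theory Defs
  imports Complex_Main "HOL-Library.Function_Algebras"
begin

text \<open>Polynomials in the variables x_0,...,x_{n-1} with real coefficients are represented
  by their coefficient functions: P :: (nat => nat) => real maps an exponent vector alpha
  (alpha i = exponent of x_i) to the coefficient of the monomial x^alpha.\<close>

type_synonym rpoly = "(nat \<Rightarrow> nat) \<Rightarrow> real"

definition pscale :: "real \<Rightarrow> rpoly \<Rightarrow> rpoly" where
  "pscale c P = (\<lambda>\<alpha>. c * P \<alpha>)"

definition expvecs :: "nat \<Rightarrow> (nat \<Rightarrow> nat) set" where
  "expvecs n = {\<alpha>. \<forall>i\<ge>n. \<alpha> i = 0}"

definition is_poly :: "nat \<Rightarrow> rpoly \<Rightarrow> bool" where
  "is_poly n P \<longleftrightarrow> finite {\<alpha>. P \<alpha> \<noteq> 0} \<and> {\<alpha>. P \<alpha> \<noteq> 0} \<subseteq> expvecs n"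

definition deg_le :: "nat \<Rightarrow> rpoly \<Rightarrow> nat \<Rightarrow> bool" where
  "deg_le n P D \<longleftrightarrow> (\<forall>\<alpha>. P \<alpha> \<noteq> 0 \<longrightarrow> (\<Sum>i<n. \<alpha> i) \<le> D)"

definition peval :: "nat \<Rightarrow> rpoly \<Rightarrow> (nat \<Rightarrow> real) \<Rightarrow> real" where
  "peval n P a = (\<Sum>\<alpha>\<in>{\<alpha>. P \<alpha> \<noteq> 0}. P \<alpha> * (\<Prod>i<n. a i ^ \<alpha> i))"

definition pderiv_multi :: "nat \<Rightarrow> (nat \<Rightarrow> nat) \<Rightarrow> rpoly \<Rightarrow> rpoly" where
  "pderiv_multi n \<beta> P = (\<lambda>\<alpha>.
     (\<Prod>i<n. real (fact (\<alpha> i + \<beta> i)) / real (fact (\<alpha> i))) * P (\<lambda>i. \<alpha> i + \<beta> i))"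

definition zero_mult_ge :: "nat \<Rightarrow> rpoly \<Rightarrow> nat \<Rightarrow> (nat \<Rightarrow> real) \<Rightarrow> bool" where
  "zero_mult_ge n P k a \<longleftrightarrow>
     (\<forall>\<beta>\<in>expvecs n. (\<Sum>i<n. \<beta> i) < k \<longrightarrow> peval n (pderiv_multi n \<beta> P) a = 0)"

definition grid :: "nat \<Rightarrow> nat \<Rightarrow> (nat \<Rightarrow> nat) set" where
  "grid n m = {a. (\<forall>i<n. a i \<le> m) \<and> (\<forall>i\<ge>n. a i = 0)}"

text \<open>The monomial x^alpha is divisible by
  x_{i_1}^{m+1}...x_{i_k}^{m+1} (indices in {0..n-1}, not necessarily distinct,
  given by the function iota on {0..k-1}) iff alpha_i >= (m+1) * #{j<k. iota j = i} for all i.\<close>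
definition reduced :: "nat \<Rightarrow> nat \<Rightarrow> nat \<Rightarrow> rpoly \<Rightarrow> bool" where
  "reduced n m k P \<longleftrightarrow>
     deg_le n P (m * n + (m + 1) * (k - 1) - 1) \<and>
     (\<forall>\<alpha>. P \<alpha> \<noteq> 0 \<longrightarrow>
        \<not> (\<exists>\<iota>::nat \<Rightarrow> nat. (\<forall>j<k. \<iota> j < n) \<and>
              (\<forall>i<n. (m + 1) * card {j. j < k \<and> \<iota> j = i} \<le> \<alpha> i)))"

definition U_space :: "nat \<Rightarrow> nat \<Rightarrow> nat \<Rightarrow> rpoly set" where
  "U_space n m k = {P. is_poly n P \<and> reduced n m k P \<and>
      (\<forall>a\<in>grid n m - {(\<lambda>_. 0)}. zero_mult_ge n P k (\<lambda>i. real (a i)))}"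

text \<open>The generator (x_1...x_n)^m (x^l)^(m+1) (x_1^d + ... + x_n^d).\<close>
definition W_gen :: "nat \<Rightarrow> nat \<Rightarrow> nat \<Rightarrow> (nat \<Rightarrow> nat) \<Rightarrow> rpoly" where
  "W_gen n m d l = (\<lambda>\<alpha>. \<Sum>j<n.
      (if \<alpha> = (\<lambda>i. if i < n then m + (m + 1) * l i + (if i = j then d else 0) else 0)
       then 1 else 0))"

definition W_space :: "nat \<Rightarrow> nat \<Rightarrow> nat \<Rightarrow> rpoly set" where
  "W_space n m k = module.span pscale
     {W_gen n m d l | d l. l \<in> expvecs n \<and>
        d + (m + 1) * (\<Sum>i<n. l i) = (m + 1) * (k - 1) - 1}"

end

theory Submission
  imports Defs "HOL-Computational_Algebra.Polynomial" "HOL-Library.FuncSet" "HOL-Library.Product_Lexorder"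
begin

(* Write exponents in base m + 1, alpha = (m + 1) q + r with
   r in mB^n.  A monomial is (m,k)-reduced iff |q| < k, unless r = (m,...,m) and |q| = k - 1,
   where the degree bound fails.  So the reduced polynomials have dimension
   |mB^n| * N(k) - E(k - 1), where N(d) and E(d) count the exponent vectors q with |q| < d and
   |q| = d.  Inside this space U is cut out by the (|mB^n| - 1) * N(k) conditions
   (d^b P)(a) = 0 for a in mB^n - {0} and |b| < k.  They are linearly independent: the
   products of (x_i - s)^(b_i + [s < a_i]) over i < n, s <= m, are reduced and triangular for
   these conditions ordered by (|b|, |a|); for the top conditions a = (m,...,m), |b| = k - 1,
   a second such product cancels the non-reduced leading monomial.  Hence
   dim U = N(k) - E(k - 1) = N(k - 1).  The generators of W are indexed by the N(k - 1) vectors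
   l with |l| <= k - 2, and they are independent: as n > |l|, some l_j = 0, and the monomial
   x^m x^((m + 1) l) x_j^d of the generator for l occurs only in generators for l' >= l. *)

section \<open>Linear functionals with triangular witnesses\<close>

context vector_space
begin

lemma subspace_common_kernel:
  assumes V: "subspace V"
    and add: "\<And>c x y. c \<in> I \<Longrightarrow> x \<in> V \<Longrightarrow> y \<in> V \<Longrightarrow> l c (x + y) = l c x + l c y"
    and scale: "\<And>c r x. c \<in> I \<Longrightarrow> x \<in> V \<Longrightarrow> l c (r *s x) = r * l c x"
  shows "subspace {x\<in>V. \<forall>c\<in>I. l c x = 0}"
  unfolding subspace_def
proof (intro conjI ballI allI)
  show "0 \<in> {x\<in>V. \<forall>c\<in>I. l c x = 0}"
    using V scale[of _ 0 0] by (auto simp: subspace_0)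
qed (use V add scale in \<open>auto simp: subspace_add subspace_scale\<close>)

lemma dim_kernel_functional_add_1:
  fixes f :: "'b \<Rightarrow> 'a"
  assumes V: "subspace V" and B: "finite B" "V \<subseteq> span B"
    and add: "\<And>x y. x \<in> V \<Longrightarrow> y \<in> V \<Longrightarrow> f (x + y) = f x + f y"
    and scale: "\<And>r x. x \<in> V \<Longrightarrow> f (r *s x) = r * f x"
    and w: "w \<in> V" "f w \<noteq> 0"
  shows "dim {x\<in>V. f x = 0} + 1 = dim V"
proof -
  define K where "K = {x\<in>V. f x = 0}"
  have "subspace K"
    unfolding K_def using subspace_common_kernel[of V "{()}" "\<lambda>_. f"] V add scale by simp
  obtain C where C: "C \<subseteq> K" "independent C" "K \<subseteq> span C" "card C = dim K"
    using basis_exists by blast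
  have "finite C"
    using independent_span_bound[OF B(1) C(2)] C(1) B(2) by (auto simp: K_def)
  have span_C: "span C = K" using span_subspace[OF C(1,3) \<open>subspace K\<close>] .
  have "w \<notin> span C" using w by (simp add: span_C K_def)
  have "dim V = card (insert w C)"
  proof (rule dim_unique)
    show "insert w C \<subseteq> V" using w C(1) by (auto simp: K_def)
    show "independent (insert w C)" using independent_insertI[OF \<open>w \<notin> span C\<close> C(2)] .
    show "V \<subseteq> span (insert w C)"
    proof
      fix x assume "x \<in> V"
      define t where "t = f x / f w"
      have "x - t *s w \<in> V" using V \<open>x \<in> V\<close> w(1) by (simp add: subspace_diff subspace_scale)
      moreover have "f (x - t *s w) = 0"
      proof -
        have "f (x - t *s w) = f x - t * f w"
          using add[OF \<open>x \<in> V\<close> subspace_scale[OF V w(1)], of "- t"] scale[OF w(1), of "- t"]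
          by simp
        then show ?thesis using w(2) by (simp add: t_def)
      qed
      ultimately have "x - t *s w \<in> span (insert w C)"
        using span_C span_mono[of C "insert w C"] by (auto simp: K_def)
      then have "(x - t *s w) + t *s w \<in> span (insert w C)"
        by (intro span_add span_scale) (auto intro: span_base)
      then show "x \<in> span (insert w C)" by simp
    qed
  qed simp
  moreover have "w \<notin> C" using \<open>w \<notin> span C\<close> span_base by blast
  ultimately show ?thesis using \<open>finite C\<close> C(4) unfolding K_def by simp
qed

lemma dim_common_kernel_insert:
  fixes l :: "'i \<Rightarrow> 'b \<Rightarrow> 'a"
  assumes V: "subspace V" and B: "finite B" "V \<subseteq> span B"
    and add: "\<And>c' x y. c' \<in> insert c I \<Longrightarrow> x \<in> V \<Longrightarrow> y \<in> V \<Longrightarrow> l c' (x + y) = l c' x + l c' y"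
    and scale: "\<And>c' r x. c' \<in> insert c I \<Longrightarrow> x \<in> V \<Longrightarrow> l c' (r *s x) = r * l c' x"
    and w: "w \<in> V" "l c w \<noteq> 0" "\<forall>c'\<in>I. l c' w = 0"
  shows "dim {x\<in>V. \<forall>c'\<in>insert c I. l c' x = 0} + 1 = dim {x\<in>V. \<forall>c'\<in>I. l c' x = 0}"
proof -
  define K where "K = {x\<in>V. \<forall>c'\<in>I. l c' x = 0}"
  have "K \<subseteq> V" by (auto simp: K_def)
  have "subspace K"
    unfolding K_def by (rule subspace_common_kernel[OF V]) (use add scale in simp_all)
  have "dim {x\<in>K. l c x = 0} + 1 = dim K"
  proof (rule dim_kernel_functional_add_1[OF \<open>subspace K\<close> B(1)])
    show "K \<subseteq> span B" using B(2) \<open>K \<subseteq> V\<close> by blast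
    show "l c (x + y) = l c x + l c y" if "x \<in> K" "y \<in> K" for x y
      using add that \<open>K \<subseteq> V\<close> by blast
    show "l c (r *s x) = r * l c x" if "x \<in> K" for r x
      using scale that \<open>K \<subseteq> V\<close> by blast
  qed (use w in \<open>auto simp: K_def\<close>)
  moreover have "{x\<in>K. l c x = 0} = {x\<in>V. \<forall>c'\<in>insert c I. l c' x = 0}"
    by (auto simp: K_def)
  ultimately show ?thesis by (simp add: K_def)
qed

lemma dim_common_kernel_add_card:
  fixes l :: "'i \<Rightarrow> 'b \<Rightarrow> 'a" and rank :: "'i \<Rightarrow> 'r::linorder"
  assumes V: "subspace V" and B: "finite B" "V \<subseteq> span B" and "finite I"
    and add: "\<And>c x y. c \<in> I \<Longrightarrow> x \<in> V \<Longrightarrow> y \<in> V \<Longrightarrow> l c (x + y) = l c x + l c y"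
    and scale: "\<And>c r x. c \<in> I \<Longrightarrow> x \<in> V \<Longrightarrow> l c (r *s x) = r * l c x"
    and triangular: "\<And>c. c \<in> I \<Longrightarrow>
      \<exists>w\<in>V. l c w \<noteq> 0 \<and> (\<forall>c'\<in>I. c' \<noteq> c \<and> rank c' \<le> rank c \<longrightarrow> l c' w = 0)"
  shows "dim {x\<in>V. \<forall>c\<in>I. l c x = 0} + card I = dim V"
proof -
  have "dim {x\<in>V. \<forall>c\<in>S. l c x = 0} + card S = dim V" if "finite S" "S \<subseteq> I" for S
    using that
  proof (induction S rule: finite_ranking_induct[where f = rank])
    case (insert c S)
    show ?case
    proof (cases "c \<in> S")
      case True
      then show ?thesis using insert.IH insert.prems by (simp add: insert_absorb)
    next
      case False
      have sub: "insert c S \<subseteq> I" using insert.prems .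
      then have "c \<in> I" by simp
      then obtain w where w: "w \<in> V" "l c w \<noteq> 0"
          "\<forall>c'\<in>I. c' \<noteq> c \<and> rank c' \<le> rank c \<longrightarrow> l c' w = 0"
        using triangular by blast
      have "\<forall>c'\<in>S. l c' w = 0"
      proof
        fix c' assume "c' \<in> S"
        then have "c' \<noteq> c" "c' \<in> I" using False sub by auto
        then show "l c' w = 0" using w(3) insert.hyps(2)[OF \<open>c' \<in> S\<close>] by blast
      qed
      moreover have "l c' (x + y) = l c' x + l c' y" "l c' (r *s x) = r * l c' x"
        if "c' \<in> insert c S" "x \<in> V" "y \<in> V" for c' r x y
        using that sub add scale by blast+
      ultimately have "dim {x\<in>V. \<forall>c\<in>insert c S. l c x = 0} + 1 = dim {x\<in>V. \<forall>c\<in>S. l c x = 0}"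
        using dim_common_kernel_insert[where l = l and c = c and I = S, OF V B _ _ w(1,2)] by blast
      then show ?thesis using insert.IH sub False insert.hyps(1) by simp
    qed
  qed simp
  then show ?thesis using \<open>finite I\<close> by blast
qed

end

section \<open>Polynomials as coefficient functions\<close>

interpretation rpoly: vector_space pscale
  by unfold_locales (auto simp: pscale_def algebra_simps fun_eq_iff)

lemma pscale_apply [simp]: "pscale c P \<alpha> = c * P \<alpha>"
  by (simp add: pscale_def)

lemma sum_rpoly_apply: "(\<Sum>x\<in>A. f x) (\<alpha>::nat \<Rightarrow> nat) = (\<Sum>x\<in>A. f x \<alpha>)"
  by (induction A rule: infinite_finite_induct) auto

definition supp :: "rpoly \<Rightarrow> (nat \<Rightarrow> nat) set" where
  "supp P = {\<alpha>. P \<alpha> \<noteq> 0}"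

definition monomial :: "(nat \<Rightarrow> nat) \<Rightarrow> rpoly" where
  "monomial \<alpha> = (\<lambda>\<beta>. if \<beta> = \<alpha> then 1 else 0)"

definition polys_supported_in :: "(nat \<Rightarrow> nat) set \<Rightarrow> rpoly set" where
  "polys_supported_in A = {P. supp P \<subseteq> A}"

lemma is_poly_iff_supp: "is_poly n P \<longleftrightarrow> finite (supp P) \<and> supp P \<subseteq> expvecs n"
  by (simp add: is_poly_def supp_def)

lemma supp_add: "supp (P + Q) \<subseteq> supp P \<union> supp Q"
  by (auto simp: supp_def)

lemma supp_pscale: "supp (pscale c P) \<subseteq> supp P"
  by (auto simp: supp_def)

lemma supp_monomial [simp]: "supp (monomial \<alpha>) = {\<alpha>}"
  by (auto simp: supp_def monomial_def)

lemma subspace_polys_supported_in: "rpoly.subspace (polys_supported_in A)"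
  unfolding rpoly.subspace_def
proof (intro conjI ballI allI)
  show "0 \<in> polys_supported_in A" by (simp add: polys_supported_in_def supp_def)
  show "P + Q \<in> polys_supported_in A" if "P \<in> polys_supported_in A" "Q \<in> polys_supported_in A" for P Q
    using that supp_add[of P Q] by (auto simp: polys_supported_in_def)
  show "pscale c P \<in> polys_supported_in A" if "P \<in> polys_supported_in A" for c P
    using that supp_pscale[of c P] by (auto simp: polys_supported_in_def)
qed

lemma polys_supported_in_subset_span:
  assumes "finite A"
  shows "polys_supported_in A \<subseteq> rpoly.span (monomial ` A)"
proof
  fix P assume P: "P \<in> polys_supported_in A"
  have "P = (\<Sum>\<alpha>\<in>A. pscale (P \<alpha>) (monomial \<alpha>))"
  proof
    fix \<beta>
    have "(\<Sum>\<alpha>\<in>A. pscale (P \<alpha>) (monomial \<alpha>)) \<beta> = (if \<beta> \<in> A then P \<beta> else 0)"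
      using assms by (simp add: sum_rpoly_apply monomial_def if_distrib[of "\<lambda>x. _ * x"] cong: if_cong)
    then show "P \<beta> = (\<Sum>\<alpha>\<in>A. pscale (P \<alpha>) (monomial \<alpha>)) \<beta>"
      using P by (auto simp: polys_supported_in_def supp_def)
  qed
  also have "\<dots> \<in> rpoly.span (monomial ` A)"
    by (intro rpoly.span_sum rpoly.span_scale rpoly.span_base) auto
  finally show "P \<in> rpoly.span (monomial ` A)" .
qed

lemma dim_polys_supported_in:
  assumes "finite A"
  shows "rpoly.dim (polys_supported_in A) = card A"
proof -
  have inj: "inj monomial"
    by (rule injI) (metis monomial_def zero_neq_one)
  have "rpoly.independent (monomial ` A)"
  proof
    assume "rpoly.dependent (monomial ` A)"
    then obtain u \<alpha> where "\<alpha> \<in> A" "u (monomial \<alpha>) \<noteq> 0"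
      and "(\<Sum>v\<in>monomial ` A. pscale (u v) v) = 0"
      using rpoly.dependent_finite[OF finite_imageI[OF assms]] by blast
    then have "(\<Sum>\<beta>\<in>A. pscale (u (monomial \<beta>)) (monomial \<beta>)) \<alpha> = 0"
      by (simp add: sum.reindex[OF inj_on_subset[OF inj]])
    moreover have "(\<Sum>\<beta>\<in>A. pscale (u (monomial \<beta>)) (monomial \<beta>)) \<alpha> = u (monomial \<alpha>)"
      using assms \<open>\<alpha> \<in> A\<close> by (simp add: sum_rpoly_apply monomial_def if_distrib[of "\<lambda>x. _ * x"] cong: if_cong)
    ultimately show False using \<open>u (monomial \<alpha>) \<noteq> 0\<close> by simp
  qed
  moreover have "monomial ` A \<subseteq> polys_supported_in A"
    by (auto simp: polys_supported_in_def)
  ultimately have "rpoly.dim (polys_supported_in A) = card (monomial ` A)"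
    using polys_supported_in_subset_span[OF assms] by (intro rpoly.dim_unique) auto
  then show ?thesis using card_image[OF inj_on_subset[OF inj]] by simp
qed

lemma peval_eq_sum_superset:
  assumes "finite F" "supp P \<subseteq> F"
  shows "peval n P a = (\<Sum>\<alpha>\<in>F. P \<alpha> * (\<Prod>i<n. a i ^ \<alpha> i))"
  unfolding peval_def
  by (rule sum.mono_neutral_left) (use assms in \<open>auto simp: supp_def\<close>)

lemma peval_add:
  assumes "finite (supp P)" "finite (supp Q)"
  shows "peval n (P + Q) a = peval n P a + peval n Q a"
  using assms supp_add[of P Q]
  by (subst (1 2 3) peval_eq_sum_superset[where F = "supp P \<union> supp Q"])
    (auto simp: algebra_simps sum.distrib)

lemma peval_pscale:
  assumes "finite (supp P)"
  shows "peval n (pscale c P) a = c * peval n P a"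
  using assms supp_pscale[of c P]
  by (subst (1 2) peval_eq_sum_superset[where F = "supp P"]) (auto simp: sum_distrib_left ac_simps)

lemma finite_supp_pderiv_multi:
  assumes "finite (supp P)"
  shows "finite (supp (pderiv_multi n \<beta> P))"
proof -
  have "supp (pderiv_multi n \<beta> P) \<subseteq> (\<lambda>\<gamma> i. \<gamma> i - \<beta> i) ` supp P"
  proof
    fix \<alpha> assume "\<alpha> \<in> supp (pderiv_multi n \<beta> P)"
    then have "(\<lambda>i. \<alpha> i + \<beta> i) \<in> supp P" by (auto simp: supp_def pderiv_multi_def)
    then show "\<alpha> \<in> (\<lambda>\<gamma> i. \<gamma> i - \<beta> i) ` supp P" by (rule image_eqI[rotated]) simp
  qed
  then show ?thesis using assms finite_surj by blast
qed

lemma pderiv_multi_add: "pderiv_multi n \<beta> (P + Q) = pderiv_multi n \<beta> P + pderiv_multi n \<beta> Q"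
  by (simp add: pderiv_multi_def fun_eq_iff algebra_simps)

lemma pderiv_multi_pscale: "pderiv_multi n \<beta> (pscale c P) = pscale c (pderiv_multi n \<beta> P)"
  by (simp add: pderiv_multi_def fun_eq_iff)

definition pderiv_at :: "nat \<Rightarrow> (nat \<Rightarrow> nat) \<times> (nat \<Rightarrow> nat) \<Rightarrow> rpoly \<Rightarrow> real" where
  "pderiv_at n c P = peval n (pderiv_multi n (snd c) P) (\<lambda>i. real (fst c i))"

lemma pderiv_at_add:
  assumes "finite (supp P)" "finite (supp Q)"
  shows "pderiv_at n c (P + Q) = pderiv_at n c P + pderiv_at n c Q"
  unfolding pderiv_at_def pderiv_multi_add
  by (rule peval_add) (use assms finite_supp_pderiv_multi in auto)

lemma pderiv_at_pscale:
  assumes "finite (supp P)"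
  shows "pderiv_at n c (pscale r P) = r * pderiv_at n c P"
  unfolding pderiv_at_def pderiv_multi_pscale
  by (rule peval_pscale) (use assms finite_supp_pderiv_multi in auto)

lemma pderiv_at_diff:
  assumes "finite (supp P)" "finite (supp Q)"
  shows "pderiv_at n c (P - Q) = pderiv_at n c P - pderiv_at n c Q"
proof -
  have "pscale (-1) Q = - Q" by (simp add: fun_eq_iff)
  then have "pderiv_at n c (- Q) = - pderiv_at n c Q"
    using pderiv_at_pscale[OF assms(2), of n c "-1"] by simp
  moreover have "finite (supp (- Q))" using assms(2) by (simp add: supp_def)
  then have "pderiv_at n c (P + - Q) = pderiv_at n c P + pderiv_at n c (- Q)"
    by (rule pderiv_at_add[OF assms(1)])
  ultimately show ?thesis by simp
qed

section \<open>Product polynomials\<close>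

definition exp_box :: "nat \<Rightarrow> (nat \<Rightarrow> nat) \<Rightarrow> (nat \<Rightarrow> nat) set" where
  "exp_box n d = {\<alpha>. (\<forall>i<n. \<alpha> i \<le> d i) \<and> (\<forall>i\<ge>n. \<alpha> i = 0)}"

lemma grid_eq_exp_box: "grid n m = exp_box n (\<lambda>_. m)"
  by (simp add: grid_def exp_box_def)

lemma exp_box_subset_expvecs: "exp_box n d \<subseteq> expvecs n"
  by (auto simp: exp_box_def expvecs_def)

lemma bij_betw_exp_box_PiE:
  "bij_betw (\<lambda>\<alpha>. restrict \<alpha> {..<n}) (exp_box n d) (PiE {..<n} (\<lambda>i. {..d i}))"
proof (rule bij_betw_byWitness[where f' = "\<lambda>g i. if i < n then g i else 0"])
  show "(\<lambda>\<alpha>. restrict \<alpha> {..<n}) ` exp_box n d \<subseteq> PiE {..<n} (\<lambda>i. {..d i})"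
    unfolding image_subset_iff restrict_PiE_iff by (simp add: exp_box_def)
qed (auto simp: exp_box_def PiE_def extensional_def fun_eq_iff)

lemma finite_exp_box: "finite (exp_box n d)"
  using bij_betw_finite[OF bij_betw_exp_box_PiE[of n d]] by (simp add: finite_PiE)

lemma finite_grid: "finite (grid n m)"
  by (simp add: grid_eq_exp_box finite_exp_box)

lemma finite_expvecs_sum_le: "finite {\<alpha>\<in>expvecs n. (\<Sum>i<n. \<alpha> i) \<le> D}"
proof (rule finite_subset[OF _ finite_exp_box[of n "\<lambda>_. D"]])
  show "{\<alpha>\<in>expvecs n. (\<Sum>i<n. \<alpha> i) \<le> D} \<subseteq> exp_box n (\<lambda>_. D)"
  proof
    fix \<alpha> assume \<alpha>: "\<alpha> \<in> {\<alpha>\<in>expvecs n. (\<Sum>i<n. \<alpha> i) \<le> D}"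
    have "\<alpha> i \<le> D" if "i < n" for i
      using member_le_sum[of i "{..<n}" \<alpha>] that \<alpha> by simp
    then show "\<alpha> \<in> exp_box n (\<lambda>_. D)" using \<alpha> by (simp add: exp_box_def expvecs_def)
  qed
qed

text \<open>The coefficients of the product \<open>\<Prod>i<n. ps i (x i)\<close> of univariate polynomials in
  distinct variables.\<close>
definition prod_poly :: "nat \<Rightarrow> (nat \<Rightarrow> real poly) \<Rightarrow> rpoly" where
  "prod_poly n ps = (\<lambda>\<alpha>. if \<alpha> \<in> expvecs n then (\<Prod>i<n. coeff (ps i) (\<alpha> i)) else 0)"

lemma supp_prod_poly: "supp (prod_poly n ps) \<subseteq> exp_box n (\<lambda>i. degree (ps i))"
  by (auto simp: supp_def prod_poly_def exp_box_def expvecs_def coeff_eq_0 split: if_splits)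
    (meson coeff_eq_0 lessThan_iff not_le_imp_less)

lemma finite_supp_prod_poly: "finite (supp (prod_poly n ps))"
  using finite_subset[OF supp_prod_poly finite_exp_box] .

lemma prod_poly_at_degrees_eq_1:
  assumes "\<alpha> \<in> expvecs n" "\<forall>i<n. \<alpha> i = degree (ps i) \<and> lead_coeff (ps i) = 1"
  shows "prod_poly n ps \<alpha> = 1"
  using assms by (simp add: prod_poly_def)

lemma peval_prod_poly: "peval n (prod_poly n ps) a = (\<Prod>i<n. poly (ps i) (a i))"
proof -
  let ?d = "\<lambda>i. degree (ps i)"
  have "peval n (prod_poly n ps) a = (\<Sum>\<alpha>\<in>exp_box n ?d. prod_poly n ps \<alpha> * (\<Prod>i<n. a i ^ \<alpha> i))"
    by (rule peval_eq_sum_superset[OF finite_exp_box supp_prod_poly])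
  also have "\<dots> = (\<Sum>\<alpha>\<in>exp_box n ?d.
      \<Prod>i<n. coeff (ps i) (restrict \<alpha> {..<n} i) * a i ^ (restrict \<alpha> {..<n} i))"
    by (rule sum.cong) (auto simp: prod_poly_def exp_box_def expvecs_def prod.distrib)
  also have "\<dots> = (\<Sum>g\<in>PiE {..<n} (\<lambda>i. {..?d i}). \<Prod>i<n. coeff (ps i) (g i) * a i ^ (g i))"
    by (rule sum.reindex_bij_betw[OF bij_betw_exp_box_PiE])
  also have "\<dots> = (\<Prod>i<n. \<Sum>t\<le>?d i. coeff (ps i) t * a i ^ t)"
    by (rule prod_sum_PiE[symmetric]) auto
  finally show ?thesis by (simp add: poly_altdef)
qed

lemma coeff_higher_pderiv_fact:
  "coeff ((pderiv ^^ j) p) t = fact (t + j) / fact t * coeff (p :: real poly) (t + j)"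
proof (induction j arbitrary: t)
  case (Suc j)
  have "coeff ((pderiv ^^ Suc j) p) t = real (Suc t) * coeff ((pderiv ^^ j) p) (Suc t)"
    by (simp add: coeff_pderiv)
  also have "\<dots> = real (Suc t) * (fact (Suc t + j) / fact (Suc t)) * coeff p (Suc t + j)"
    using Suc by simp
  also have "\<dots> = fact (t + Suc j) / fact t * coeff p (t + Suc j)"
    by (simp del: of_nat_Suc)
  finally show ?case .
qed simp

lemma pderiv_multi_prod_poly:
  assumes "\<beta> \<in> expvecs n"
  shows "pderiv_multi n \<beta> (prod_poly n ps) = prod_poly n (\<lambda>i. (pderiv ^^ \<beta> i) (ps i))"
proof
  fix \<alpha>
  have "(\<lambda>i. \<alpha> i + \<beta> i) \<in> expvecs n \<longleftrightarrow> \<alpha> \<in> expvecs n"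
    using assms by (auto simp: expvecs_def)
  then show "pderiv_multi n \<beta> (prod_poly n ps) \<alpha> = prod_poly n (\<lambda>i. (pderiv ^^ \<beta> i) (ps i)) \<alpha>"
    unfolding pderiv_multi_def prod_poly_def
    by (simp only: coeff_higher_pderiv_fact prod.distrib) simp
qed

lemma pderiv_at_prod_poly:
  assumes "b \<in> expvecs n"
  shows "pderiv_at n (a, b) (prod_poly n ps) = (\<Prod>i<n. poly ((pderiv ^^ b i) (ps i)) (real (a i)))"
  using assms by (simp add: pderiv_at_def pderiv_multi_prod_poly peval_prod_poly)

lemma pderiv_root_power_Suc_mult:
  fixes u :: "'a::idom poly"
  shows "pderiv ([:-c, 1:] ^ Suc e * u) = [:-c, 1:] ^ e * (smult (of_nat (Suc e)) u + [:-c, 1:] * pderiv u)"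
proof -
  have "pderiv [:-c, 1:] = 1" by (simp add: pderiv_pCons)
  then show ?thesis
    unfolding pderiv_mult pderiv_power_Suc by (simp add: algebra_simps)
qed

lemma higher_pderiv_Suc: "(pderiv ^^ Suc j) p = (pderiv ^^ j) (pderiv p)"
  by (simp only: funpow_Suc_right comp_def)

lemma poly_higher_pderiv_root_power_mult_eq_0:
  fixes u :: "'a::idom poly"
  assumes "j < e"
  shows "poly ((pderiv ^^ j) ([:-c, 1:] ^ e * u)) c = 0"
  using assms
proof (induction e arbitrary: j u)
  case (Suc e)
  then show ?case
    by (cases j) (simp_all only: higher_pderiv_Suc pderiv_root_power_Suc_mult, simp_all)
qed simp

lemma poly_higher_pderiv_root_power_mult:
  fixes u :: "'a::{idom, ring_char_0} poly"
  shows "poly ((pderiv ^^ e) ([:-c, 1:] ^ e * u)) c = fact e * poly u c"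
proof (induction e arbitrary: u)
  case (Suc e)
  then show ?case by (simp only: higher_pderiv_Suc pderiv_root_power_Suc_mult) simp
qed simp

definition grid_poly :: "nat \<Rightarrow> (nat \<Rightarrow> nat) \<Rightarrow> real poly" where
  "grid_poly m e = (\<Prod>s\<le>m. [:-real s, 1:] ^ e s)"

lemma grid_poly_split:
  assumes "t \<le> m"
  shows "grid_poly m e = [:-real t, 1:] ^ e t * (\<Prod>s\<in>{..m} - {t}. [:-real s, 1:] ^ e s)"
  unfolding grid_poly_def using assms by (subst prod.remove[of _ t]) auto

lemma poly_higher_pderiv_grid_poly_eq_0:
  assumes "t \<le> m" "j < e t"
  shows "poly ((pderiv ^^ j) (grid_poly m e)) (real t) = 0"
  unfolding grid_poly_split[OF assms(1)] using assms(2) by (rule poly_higher_pderiv_root_power_mult_eq_0)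

lemma poly_higher_pderiv_grid_poly_neq_0:
  assumes "t \<le> m"
  shows "poly ((pderiv ^^ e t) (grid_poly m e)) (real t) \<noteq> 0"
  unfolding grid_poly_split[OF assms(1)] poly_higher_pderiv_root_power_mult
  by (auto simp: poly_prod)

lemma degree_grid_poly: "degree (grid_poly m e) = (\<Sum>s\<le>m. e s)"
  unfolding grid_poly_def by (subst degree_prod_eq_sum_degree) (auto simp: degree_linear_power)

lemma lead_coeff_grid_poly: "lead_coeff (grid_poly m e) = 1"
  unfolding grid_poly_def by (simp add: lead_coeff_prod lead_coeff_power)

definition grid_prod :: "nat \<Rightarrow> nat \<Rightarrow> (nat \<Rightarrow> nat \<Rightarrow> nat) \<Rightarrow> rpoly" where
  "grid_prod n m e = prod_poly n (\<lambda>i. grid_poly m (e i))"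

lemma finite_supp_grid_prod: "finite (supp (grid_prod n m e))"
  by (simp add: grid_prod_def finite_supp_prod_poly)

lemma pderiv_at_grid_prod_eq_0:
  assumes "b \<in> expvecs n" "a \<in> grid n m" "i < n" "b i < e i (a i)"
  shows "pderiv_at n (a, b) (grid_prod n m e) = 0"
  using assms poly_higher_pderiv_grid_poly_eq_0[of "a i" m "b i" "e i"]
  by (auto simp: grid_prod_def pderiv_at_prod_poly grid_def)

lemma pderiv_at_grid_prod_neq_0:
  assumes "b \<in> expvecs n" "a \<in> grid n m" "\<forall>i<n. b i = e i (a i)"
  shows "pderiv_at n (a, b) (grid_prod n m e) \<noteq> 0"
  using assms by (simp add: grid_prod_def pderiv_at_prod_poly grid_def poly_higher_pderiv_grid_poly_neq_0)

lemma supp_grid_prod: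
  "supp (grid_prod n m e) \<subseteq> exp_box n (\<lambda>i. \<Sum>s\<le>m. e i s)"
  using supp_prod_poly[of n "\<lambda>i. grid_poly m (e i)"] by (simp add: grid_prod_def degree_grid_poly)

section \<open>Reduced monomials\<close>

lemma sum_card_fibres:
  fixes \<iota> :: "nat \<Rightarrow> nat"
  assumes "\<forall>j<k. \<iota> j < n"
  shows "(\<Sum>i<n. card {j. j < k \<and> \<iota> j = i}) = k"
proof -
  have "\<iota> ` {..<k} \<subseteq> {..<n}" using assms by auto
  then show ?thesis using sum.group[OF finite_lessThan finite_lessThan, where g = \<iota> and h = "\<lambda>_. 1::nat"] by simp
qed

lemma exists_map_fibres_le:
  fixes n :: nat and q :: "nat \<Rightarrow> nat"
  shows "k \<le> (\<Sum>i<n. q i) \<Longrightarrow> \<exists>\<iota>. (\<forall>j<k. \<iota> j < n) \<and> (\<forall>i<n. card {j. j < k \<and> \<iota> j = i} \<le> q i)"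
proof (induction k arbitrary: q)
  case (Suc k)
  have "\<exists>i<n. q i \<noteq> 0"
  proof (rule ccontr)
    assume "\<not> (\<exists>i<n. q i \<noteq> 0)"
    then have "(\<Sum>i<n. q i) = 0" by simp
    then show False using Suc.prems by simp
  qed
  then obtain i0 where i0: "i0 < n" "q i0 \<ge> 1" by auto
  define q' where "q' = q(i0 := q i0 - 1)"
  have "(\<Sum>i\<in>{..<n} - {i0}. q' i) = (\<Sum>i\<in>{..<n} - {i0}. q i)"
    by (rule sum.cong) (auto simp: q'_def)
  then have "(\<Sum>i<n. q i) = (\<Sum>i<n. q' i) + 1"
    using i0 sum.remove[of "{..<n}" i0 q] sum.remove[of "{..<n}" i0 q']
    by (simp add: q'_def)
  then obtain \<iota> where \<iota>: "\<forall>j<k. \<iota> j < n" "\<forall>i<n. card {j. j < k \<and> \<iota> j = i} \<le> q' i"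
    using Suc.IH[of q'] Suc.prems by auto
  define \<iota>' where "\<iota>' = \<iota>(k := i0)"
  have fibre: "{j. j < Suc k \<and> \<iota>' j = i} =
      (if i = i0 then insert k {j. j < k \<and> \<iota> j = i} else {j. j < k \<and> \<iota> j = i})" for i
    by (auto simp: less_Suc_eq \<iota>'_def)
  have "\<forall>j<Suc k. \<iota>' j < n" using \<iota>(1) i0(1) by (auto simp: \<iota>'_def less_Suc_eq)
  moreover have "\<forall>i<n. card {j. j < Suc k \<and> \<iota>' j = i} \<le> q i"
    using \<iota>(2) i0 unfolding fibre by (auto simp: q'_def card_insert_if split: if_splits)
  ultimately show ?case by blast
qed simp

lemma exists_map_fibres_le_iff:
  fixes n :: nat and q :: "nat \<Rightarrow> nat"
  shows "(\<exists>\<iota>. (\<forall>j<k. \<iota> j < n) \<and> (\<forall>i<n. card {j. j < k \<and> \<iota> j = i} \<le> q i)) \<longleftrightarrow>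
    k \<le> (\<Sum>i<n. q i)"
proof
  assume "\<exists>\<iota>. (\<forall>j<k. \<iota> j < n) \<and> (\<forall>i<n. card {j. j < k \<and> \<iota> j = i} \<le> q i)"
  then obtain \<iota> where "\<forall>j<k. \<iota> j < n" "\<forall>i<n. card {j. j < k \<and> \<iota> j = i} \<le> q i" by blast
  then have "(\<Sum>i<n. card {j. j < k \<and> \<iota> j = i}) \<le> (\<Sum>i<n. q i)"
    by (intro sum_mono) auto
  then show "k \<le> (\<Sum>i<n. q i)" using \<open>\<forall>j<k. \<iota> j < n\<close> by (simp add: sum_card_fibres)
qed (rule exists_map_fibres_le)

text \<open>The left-hand side is the condition in \<open>reduced\<close>: \<open>x^\<alpha>\<close> is divisible by
  \<open>x i\<^sub>1 ^ (m + 1) * ... * x i\<^sub>k ^ (m + 1)\<close>.\<close>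
lemma divisible_monomial_iff:
  fixes n :: nat
  shows "(\<exists>\<iota>. (\<forall>j<k. \<iota> j < n) \<and> (\<forall>i<n. (m + 1) * card {j. j < k \<and> \<iota> j = i} \<le> \<alpha> i)) \<longleftrightarrow>
    k \<le> (\<Sum>i<n. \<alpha> i div (m + 1))"
  using exists_map_fibres_le_iff[of k n "\<lambda>i. \<alpha> i div (m + 1)"]
  by (simp add: less_eq_div_iff_mult_less_eq mult.commute)

definition reduced_monos :: "nat \<Rightarrow> nat \<Rightarrow> nat \<Rightarrow> (nat \<Rightarrow> nat) set" where
  "reduced_monos n m k = {\<alpha>\<in>expvecs n. (\<Sum>i<n. \<alpha> i) \<le> m * n + (m + 1) * (k - 1) - 1 \<and>
      (\<Sum>i<n. \<alpha> i div (m + 1)) < k}"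

lemma reduced_iff_supp_subset:
  assumes "is_poly n P"
  shows "reduced n m k P \<longleftrightarrow> supp P \<subseteq> reduced_monos n m k"
  using assms unfolding reduced_def deg_le_def divisible_monomial_iff is_poly_iff_supp
  by (auto simp: reduced_monos_def supp_def not_le)

lemma finite_reduced_monos: "finite (reduced_monos n m k)"
  by (rule finite_subset[OF _ finite_expvecs_sum_le]) (auto simp: reduced_monos_def)

definition expvecs_below :: "nat \<Rightarrow> nat \<Rightarrow> (nat \<Rightarrow> nat) set" where
  "expvecs_below n d = {q\<in>expvecs n. (\<Sum>i<n. q i) < d}"

definition expvecs_deg :: "nat \<Rightarrow> nat \<Rightarrow> (nat \<Rightarrow> nat) set" where
  "expvecs_deg n d = {q\<in>expvecs n. (\<Sum>i<n. q i) = d}"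

lemma finite_expvecs_below: "finite (expvecs_below n d)"
  by (rule finite_subset[OF _ finite_expvecs_sum_le[of n d]]) (auto simp: expvecs_below_def)

lemma card_expvecs_below_Suc:
  "card (expvecs_below n (Suc d)) = card (expvecs_below n d) + card (expvecs_deg n d)"
proof -
  have split: "expvecs_below n (Suc d) = expvecs_below n d \<union> expvecs_deg n d"
    by (auto simp: expvecs_below_def expvecs_deg_def)
  then have "finite (expvecs_deg n d)" using finite_expvecs_below[of n "Suc d"] by simp
  then show ?thesis
    unfolding split using finite_expvecs_below
    by (subst card_Un_disjoint) (auto simp: expvecs_below_def expvecs_deg_def)
qed

lemma expvecs_sum_less:
  assumes "\<alpha> \<in> expvecs n" "\<beta> \<in> expvecs n" "\<forall>i<n. \<alpha> i \<le> \<beta> i" "\<alpha> \<noteq> \<beta>"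
  shows "(\<Sum>i<n. \<alpha> i) < (\<Sum>i<n. \<beta> i)"
proof -
  have "\<exists>i<n. \<alpha> i \<noteq> \<beta> i"
  proof (rule ccontr)
    assume "\<not> (\<exists>i<n. \<alpha> i \<noteq> \<beta> i)"
    then have "\<alpha> i = \<beta> i" for i using assms(1,2) by (cases "i < n") (auto simp: expvecs_def)
    then show False using assms(4) by auto
  qed
  then obtain i where "i < n" "\<alpha> i \<noteq> \<beta> i" by blast
  then have "\<exists>i\<in>{..<n}. \<alpha> i < \<beta> i" using assms(3) by (auto simp: order_less_le)
  then show ?thesis using assms(3) by (intro sum_strict_mono_ex1) auto
qed

lemma expvecs_eq_if_le_sum_le:
  assumes "\<alpha> \<in> expvecs n" "\<beta> \<in> expvecs n" "\<forall>i<n. \<alpha> i \<le> \<beta> i" "(\<Sum>i<n. \<beta> i) \<le> (\<Sum>i<n. \<alpha> i)"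
  shows "\<alpha> = \<beta>"
  using expvecs_sum_less[OF assms(1-3)] assms(4) by fastforce

definition corner :: "nat \<Rightarrow> nat \<Rightarrow> nat \<Rightarrow> nat" where
  "corner n m = (\<lambda>i. if i < n then m else 0)"

lemma corner_in_grid: "corner n m \<in> grid n m"
  by (simp add: corner_def grid_def)

lemma sum_corner: "(\<Sum>i<n. corner n m i) = m * n"
  by (simp add: corner_def)

lemma grid_subset_expvecs: "grid n m \<subseteq> expvecs n"
  by (auto simp: grid_def expvecs_def)

lemma sum_grid_le: "r \<in> grid n m \<Longrightarrow> (\<Sum>i<n. r i) \<le> m * n"
  using sum_mono[of "{..<n}" r "\<lambda>_. m"] by (simp add: grid_def mult.commute)

lemma sum_grid_less:
  assumes "r \<in> grid n m" "r \<noteq> corner n m"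
  shows "(\<Sum>i<n. r i) < m * n"
proof -
  have "(\<Sum>i<n. r i) < (\<Sum>i<n. corner n m i)"
    by (rule expvecs_sum_less)
      (use assms in \<open>auto simp: grid_def corner_def expvecs_def\<close>)
  then show ?thesis by (simp add: corner_def mult.commute)
qed

definition join_digits :: "nat \<Rightarrow> (nat \<Rightarrow> nat) \<Rightarrow> (nat \<Rightarrow> nat) \<Rightarrow> nat \<Rightarrow> nat" where
  "join_digits m r q = (\<lambda>i. (m + 1) * q i + r i)"

lemma sum_join_digits:
  "(\<Sum>i<n. join_digits m r q i) = (m + 1) * (\<Sum>i<n. q i) + (\<Sum>i<n. r i)"
  by (simp add: join_digits_def sum.distrib sum_distrib_left)

lemma join_digits_mod_div:
  assumes "r i \<le> m"
  shows "join_digits m r q i mod (m + 1) = r i \<and> join_digits m r q i div (m + 1) = q i"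
proof -
  define b where "b = m + 1"
  have "r i < b" using assms by (simp add: b_def)
  then show ?thesis unfolding join_digits_def b_def[symmetric] by simp
qed

lemma inj_on_join_digits: "inj_on (\<lambda>(r, q). join_digits m r q) (grid n m \<times> UNIV)"
proof (rule inj_onI, clarify)
  fix r q r' q'
  assume r: "r \<in> grid n m" "r' \<in> grid n m" and eq: "join_digits m r q = join_digits m r' q'"
  have "r i \<le> m \<and> r' i \<le> m" for i using r by (cases "i < n") (auto simp: grid_def)
  then have "r i = r' i \<and> q i = q' i" for i
    using join_digits_mod_div[of r i m q] join_digits_mod_div[of r' i m q'] eq by simp
  then show "r = r' \<and> q = q'" by (simp add: fun_eq_iff)
qed

lemma sum_join_digits_le:
  assumes "k \<ge> 2" "r \<in> grid n m" "(\<Sum>i<n. q i) < k" "\<not> (r = corner n m \<and> (\<Sum>i<n. q i) = k - 1)"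
  shows "(\<Sum>i<n. join_digits m r q i) \<le> m * n + (m + 1) * (k - 1) - 1"
proof -
  define k' where "k' = k - 2"
  have k1: "k - 1 = Suc k'" using assms(1) by (simp add: k'_def)
  have bound: "m * n + (m + 1) * (k - 1) - 1 = m * n + (m + 1) * k' + m" unfolding k1 by simp
  consider (low) "(\<Sum>i<n. q i) \<le> k'" | (top) "(\<Sum>i<n. q i) = Suc k'"
    using assms(3) k1 by linarith
  then show ?thesis
  proof cases
    case low
    then have "(m + 1) * (\<Sum>i<n. q i) \<le> (m + 1) * k'" by (rule mult_le_mono2)
    then show ?thesis unfolding bound sum_join_digits using sum_grid_le[OF assms(2)] by linarith
  next
    case top
    then have "(\<Sum>i<n. r i) < m * n" using sum_grid_less[OF assms(2)] assms(4) k1 by auto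
    moreover have "(m + 1) * (\<Sum>i<n. q i) = (m + 1) * k' + m + 1" using top by simp
    ultimately show ?thesis unfolding bound sum_join_digits by linarith
  qed
qed

lemma reduced_monosI:
  assumes "\<alpha> \<in> expvecs n" "(\<Sum>i<n. \<alpha> i) \<le> m * n + (m + 1) * (k - 1) - 1"
    and "\<forall>i<n. \<alpha> i \<le> (m + 1) * q i + m" "(\<Sum>i<n. q i) < k"
  shows "\<alpha> \<in> reduced_monos n m k"
proof -
  have "\<alpha> i div (m + 1) \<le> q i" if "i < n" for i
  proof -
    have "\<alpha> i \<le> (m + 1) * q i + m" using assms(3) that by blast
    then have "\<alpha> i < (q i + 1) * (m + 1)" by (simp add: algebra_simps)
    then have "\<alpha> i div (m + 1) < q i + 1" by (rule less_mult_imp_div_less)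
    then show ?thesis by simp
  qed
  then have "(\<Sum>i<n. \<alpha> i div (m + 1)) \<le> (\<Sum>i<n. q i)" by (intro sum_mono) auto
  then show ?thesis using assms by (simp add: reduced_monos_def)
qed

lemma exp_box_join_digits_subset_reduced_monos:
  assumes "k \<ge> 2" "r \<in> grid n m" "q \<in> expvecs_below n k"
    and "\<not> (r = corner n m \<and> (\<Sum>i<n. q i) = k - 1)"
  shows "exp_box n (join_digits m r q) \<subseteq> reduced_monos n m k"
proof
  fix \<alpha> assume "\<alpha> \<in> exp_box n (join_digits m r q)"
  then have \<alpha>: "\<alpha> \<in> expvecs n" "\<forall>i<n. \<alpha> i \<le> join_digits m r q i"
    using exp_box_subset_expvecs by (auto simp: exp_box_def)
  have q: "(\<Sum>i<n. q i) < k" using assms(3) by (simp add: expvecs_below_def)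
  show "\<alpha> \<in> reduced_monos n m k"
  proof (rule reduced_monosI[OF \<alpha>(1) _ _ q])
    have "(\<Sum>i<n. \<alpha> i) \<le> (\<Sum>i<n. join_digits m r q i)" using \<alpha>(2) by (intro sum_mono) auto
    then show "(\<Sum>i<n. \<alpha> i) \<le> m * n + (m + 1) * (k - 1) - 1"
      using sum_join_digits_le[OF assms(1,2) q assms(4)] by linarith
    show "\<forall>i<n. \<alpha> i \<le> (m + 1) * q i + m"
      using \<alpha>(2) assms(2) by (fastforce simp: join_digits_def grid_def)
  qed
qed

text \<open>The top exponent itself has degree one too large, but everything strictly below it is
  reduced.\<close>
lemma exp_box_top_minus_subset_reduced_monos:
  assumes "k \<ge> 2" "q \<in> expvecs_deg n (k - 1)"
  shows "exp_box n (join_digits m (corner n m) q) - {join_digits m (corner n m) q} \<subseteq>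
    reduced_monos n m k"
proof
  let ?top = "join_digits m (corner n m) q"
  fix \<alpha> assume "\<alpha> \<in> exp_box n ?top - {?top}"
  then have \<alpha>: "\<alpha> \<in> expvecs n" "\<forall>i<n. \<alpha> i \<le> ?top i" "\<alpha> \<noteq> ?top"
    using exp_box_subset_expvecs by (auto simp: exp_box_def)
  have q: "q \<in> expvecs n" "(\<Sum>i<n. q i) = k - 1" using assms(2) by (simp_all add: expvecs_deg_def)
  have "?top \<in> expvecs n" using q(1) by (simp add: join_digits_def corner_def expvecs_def)
  then have "(\<Sum>i<n. \<alpha> i) < (\<Sum>i<n. ?top i)" using \<alpha> by (intro expvecs_sum_less)
  also have "\<dots> = (m + 1) * (k - 1) + m * n"
    using sum_join_digits[of m "corner n m" q n] sum_corner[of n m] q(2) by simp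
  finally have "(\<Sum>i<n. \<alpha> i) \<le> m * n + (m + 1) * (k - 1) - 1" by linarith
  moreover have "\<forall>i<n. \<alpha> i \<le> (m + 1) * q i + m"
    using \<alpha>(2) by (simp add: join_digits_def corner_def)
  moreover have "(\<Sum>i<n. q i) < k" using q(2) assms(1) by simp
  ultimately show "\<alpha> \<in> reduced_monos n m k" using \<alpha>(1) by (intro reduced_monosI)
qed

lemma reduced_monos_eq_join_digits:
  assumes "k \<ge> 2"
  shows "reduced_monos n m k = (\<lambda>(r, q). join_digits m r q) `
    (grid n m \<times> expvecs_below n k - {corner n m} \<times> expvecs_deg n (k - 1))"
    (is "_ = _ ` ?D")
proof (intro equalityI subsetI)
  fix \<alpha> assume \<alpha>: "\<alpha> \<in> reduced_monos n m k"
  define r where "r i = \<alpha> i mod (m + 1)" for i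
  define q where "q i = \<alpha> i div (m + 1)" for i
  have "\<alpha> = join_digits m r q"
    unfolding join_digits_def r_def q_def by (rule ext) (simp only: mult_div_mod_eq)
  have deg: "(\<Sum>i<n. \<alpha> i) \<le> m * n + (m + 1) * (k - 1) - 1"
    using \<alpha> unfolding reduced_monos_def by blast
  have "r \<in> grid n m"
    using \<alpha> by (simp add: r_def grid_def reduced_monos_def expvecs_def)
  moreover have "q \<in> expvecs_below n k"
    using \<alpha> by (simp add: q_def expvecs_below_def reduced_monos_def expvecs_def)
  moreover have "\<not> (r = corner n m \<and> (\<Sum>i<n. q i) = k - 1)"
  proof
    assume "r = corner n m \<and> (\<Sum>i<n. q i) = k - 1"
    then have "(\<Sum>i<n. \<alpha> i) = (m + 1) * (k - 1) + m * n"
      using sum_join_digits[of m r q n] sum_corner[of n m] \<open>\<alpha> = join_digits m r q\<close> by simp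
    moreover have "(m + 1) * (k - 1) \<ge> 1" using assms by simp
    ultimately show False using deg by linarith
  qed
  ultimately have "(r, q) \<in> ?D" by (simp add: expvecs_deg_def expvecs_below_def)
  then show "\<alpha> \<in> (\<lambda>(r, q). join_digits m r q) ` ?D"
    using \<open>\<alpha> = join_digits m r q\<close> by (intro image_eqI[where x = "(r, q)"]) simp_all
next
  fix \<alpha> assume "\<alpha> \<in> (\<lambda>(r, q). join_digits m r q) ` ?D"
  then obtain r q where "(r, q) \<in> ?D" and \<alpha>: "\<alpha> = join_digits m r q" by auto
  then have "r \<in> grid n m" "q \<in> expvecs_below n k" "\<not> (r = corner n m \<and> (\<Sum>i<n. q i) = k - 1)"
    by (auto simp: expvecs_deg_def expvecs_below_def)
  moreover from this have "\<alpha> \<in> exp_box n (join_digits m r q)"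
    by (auto simp: \<alpha> exp_box_def join_digits_def grid_def expvecs_below_def expvecs_def)
  ultimately show "\<alpha> \<in> reduced_monos n m k"
    using exp_box_join_digits_subset_reduced_monos[OF assms] by blast
qed

lemma card_reduced_monos:
  assumes "k \<ge> 2"
  shows "card (reduced_monos n m k) =
    (card (grid n m) - 1) * card (expvecs_below n k) + card (expvecs_below n (k - 1))"
proof -
  let ?T = "{corner n m} \<times> expvecs_deg n (k - 1)"
  have T: "?T \<subseteq> grid n m \<times> expvecs_below n k"
    using assms corner_in_grid by (auto simp: expvecs_deg_def expvecs_below_def)
  have below: "card (expvecs_below n k) = card (expvecs_below n (k - 1)) + card (expvecs_deg n (k - 1))"
    using card_expvecs_below_Suc[of n "k - 1"] assms by simp
  have "card (reduced_monos n m k) = card (grid n m \<times> expvecs_below n k - ?T)"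
    unfolding reduced_monos_eq_join_digits[OF assms]
    by (rule card_image[OF inj_on_subset[OF inj_on_join_digits]]) auto
  also have "\<dots> = card (grid n m \<times> expvecs_below n k) - card ?T"
  proof (rule card_Diff_subset[OF finite_subset[OF T] T])
    show "finite (grid n m \<times> expvecs_below n k)"
      by (intro finite_cartesian_product finite_grid finite_expvecs_below)
  qed
  also have "\<dots> = card (grid n m) * card (expvecs_below n k) - card (expvecs_deg n (k - 1))"
    by (simp add: card_cartesian_product)
  finally have card_eq: "card (reduced_monos n m k) =
    card (grid n m) * card (expvecs_below n k) - card (expvecs_deg n (k - 1))" .
  have "card (grid n m) > 0"
    using corner_in_grid[of n m] finite_grid[of n m] card_gt_0_iff by blast
  moreover have "R = G * (P + D) - D \<Longrightarrow> 0 < G \<Longrightarrow> R = (G - 1) * (P + D) + P"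
    for R G P D :: nat by (cases G) simp_all
  ultimately show ?thesis unfolding below using card_eq[unfolded below] by blast
qed

section \<open>The dimension of U\<close>

definition mult_conds :: "nat \<Rightarrow> nat \<Rightarrow> nat \<Rightarrow> ((nat \<Rightarrow> nat) \<times> (nat \<Rightarrow> nat)) set" where
  "mult_conds n m k = (grid n m - {\<lambda>_. 0}) \<times> expvecs_below n k"

lemma finite_mult_conds: "finite (mult_conds n m k)"
  by (simp add: mult_conds_def finite_grid finite_expvecs_below)

lemma card_mult_conds: "card (mult_conds n m k) = (card (grid n m) - 1) * card (expvecs_below n k)"
proof -
  have "(\<lambda>_. 0) \<in> grid n m" by (simp add: grid_def)
  then show ?thesis by (simp add: mult_conds_def card_cartesian_product finite_grid)
qed

lemma U_space_eq:
  "U_space n m k = {P \<in> polys_supported_in (reduced_monos n m k). \<forall>c\<in>mult_conds n m k. pderiv_at n c P = 0}"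
proof -
  have "is_poly n P \<and> reduced n m k P \<longleftrightarrow> supp P \<subseteq> reduced_monos n m k" for P
    using reduced_iff_supp_subset[of n P m k] finite_reduced_monos[of n m k]
    by (auto simp: is_poly_iff_supp reduced_monos_def intro: finite_subset)
  moreover have "(\<forall>a\<in>grid n m - {\<lambda>_. 0}. zero_mult_ge n P k (\<lambda>i. real (a i))) \<longleftrightarrow>
      (\<forall>c\<in>mult_conds n m k. pderiv_at n c P = 0)" for P
    by (auto simp: zero_mult_ge_def mult_conds_def expvecs_below_def pderiv_at_def)
  ultimately show ?thesis by (auto simp: U_space_def polys_supported_in_def)
qed

lemma supp_grid_prod_shift:
  assumes "\<forall>i<n. (\<Sum>s\<le>m. f i s) = r i"
  shows "supp (grid_prod n m (\<lambda>i s. b i + f i s)) \<subseteq> exp_box n (join_digits m r b)"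
  using supp_grid_prod[of n m "\<lambda>i s. b i + f i s"] assms
  by (auto simp: exp_box_def join_digits_def sum.distrib)

lemma grid_prod_shift_at_join_digits:
  assumes "join_digits m r b \<in> expvecs n" "\<forall>i<n. (\<Sum>s\<le>m. f i s) = r i"
  shows "grid_prod n m (\<lambda>i s. b i + f i s) (join_digits m r b) = 1"
  unfolding grid_prod_def
proof (rule prod_poly_at_degrees_eq_1[OF assms(1)], intro allI impI conjI)
  show "join_digits m r b i = degree (grid_poly m (\<lambda>s. b i + f i s))" if "i < n" for i
    using that assms(2) by (simp add: degree_grid_poly sum.distrib join_digits_def)
  show "lead_coeff (grid_poly m (\<lambda>s. b i + f i s)) = 1" for i
    by (rule lead_coeff_grid_poly)
qed

text \<open>A nonvanishing derivative forces \<open>b i + f i (a i) \<le> b' i\<close> in every coordinate.\<close>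
lemma pderiv_at_grid_prod_shift_neq_0D:
  assumes "a \<in> grid n m" "b \<in> expvecs n" "b' \<in> expvecs n" "(\<Sum>i<n. b' i) \<le> (\<Sum>i<n. b i)"
    and "pderiv_at n (a, b') (grid_prod n m (\<lambda>i s. b i + f i s)) \<noteq> 0"
  shows "b' = b \<and> (\<forall>i<n. f i (a i) = 0)"
proof -
  have le: "b i + f i (a i) \<le> b' i" if "i < n" for i
    using pderiv_at_grid_prod_eq_0[OF assms(3,1) that] assms(5) by (meson not_le)
  then have "b = b'"
    using assms(2-4) by (intro expvecs_eq_if_le_sum_le) (auto intro: add_leD1)
  then show ?thesis using le by fastforce
qed

lemma sum_less_indicator: "a \<le> Suc m \<Longrightarrow> (\<Sum>s\<le>m. if s < a then 1 else 0 :: nat) = a"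
proof -
  assume "a \<le> Suc m"
  then have "{..m} \<inter> {s. s < a} = {..<a}" by auto
  then show ?thesis by (simp add: sum.If_cases)
qed

lemma sum_positive_indicator: "(\<Sum>s\<le>m. if 0 < s then 1 else 0 :: nat) = m"
proof -
  have "{..m} \<inter> {s. 0 < s} = {0<..m}" by auto
  then show ?thesis by (simp add: sum.If_cases)
qed

definition cond_witness :: "nat \<Rightarrow> nat \<Rightarrow> (nat \<Rightarrow> nat) \<Rightarrow> (nat \<Rightarrow> nat) \<Rightarrow> rpoly" where
  "cond_witness n m a b = grid_prod n m (\<lambda>i s. b i + (if s < a i then 1 else 0))"

lemma supp_cond_witness:
  assumes "a \<in> grid n m"
  shows "supp (cond_witness n m a b) \<subseteq> exp_box n (join_digits m a b)"
  unfolding cond_witness_def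
proof (rule supp_grid_prod_shift, intro allI impI)
  fix i assume "i < n"
  then have "a i \<le> Suc m" using assms by (simp add: grid_def le_SucI)
  then show "(\<Sum>s\<le>m. if s < a i then 1 else 0) = a i" by (rule sum_less_indicator)
qed

lemma pderiv_at_cond_witness_self:
  assumes "a \<in> grid n m" "b \<in> expvecs n"
  shows "pderiv_at n (a, b) (cond_witness n m a b) \<noteq> 0"
  unfolding cond_witness_def by (rule pderiv_at_grid_prod_neq_0[OF assms(2,1)]) simp

lemma pderiv_at_cond_witness_neq_0D:
  assumes "a' \<in> grid n m" "b \<in> expvecs n" "b' \<in> expvecs n" "(\<Sum>i<n. b' i) \<le> (\<Sum>i<n. b i)"
    and "pderiv_at n (a', b') (cond_witness n m a b) \<noteq> 0"
  shows "b' = b \<and> (\<forall>i<n. a i \<le> a' i)"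
  using pderiv_at_grid_prod_shift_neq_0D[OF assms(1-4)] assms(5)
  by (fastforce simp: cond_witness_def not_less split: if_splits)

text \<open>Pairs are compared lexicographically (\<open>Product_Lexorder\<close>), so a condition \<open>(a, b)\<close>
  is ranked by \<open>|b|\<close> first and by \<open>|a|\<close> second.\<close>
definition cond_rank :: "nat \<Rightarrow> (nat \<Rightarrow> nat) \<times> (nat \<Rightarrow> nat) \<Rightarrow> nat \<times> nat" where
  "cond_rank n c = ((\<Sum>i<n. snd c i), (\<Sum>i<n. fst c i))"

lemma mult_cond_witness:
  assumes "k \<ge> 2" and c: "(a, b) \<in> mult_conds n m k"
    and not_top: "\<not> (a = corner n m \<and> (\<Sum>i<n. b i) = k - 1)"
  shows "\<exists>w\<in>polys_supported_in (reduced_monos n m k). pderiv_at n (a, b) w \<noteq> 0 \<and>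
    (\<forall>c'\<in>mult_conds n m k. c' \<noteq> (a, b) \<and> cond_rank n c' \<le> cond_rank n (a, b) \<longrightarrow>
      pderiv_at n c' w = 0)"
proof -
  have a: "a \<in> grid n m" and b: "b \<in> expvecs_below n k"
    using c by (auto simp: mult_conds_def)
  have "supp (cond_witness n m a b) \<subseteq> reduced_monos n m k"
    using supp_cond_witness[OF a] exp_box_join_digits_subset_reduced_monos[OF assms(1) a b not_top]
    by blast
  moreover have "pderiv_at n (a, b) (cond_witness n m a b) \<noteq> 0"
    using a b by (intro pderiv_at_cond_witness_self) (simp_all add: expvecs_below_def)
  moreover have "pderiv_at n (a', b') (cond_witness n m a b) = 0"
    if "(a', b') \<in> mult_conds n m k" "(a', b') \<noteq> (a, b)"
      and rank: "cond_rank n (a', b') \<le> cond_rank n (a, b)" for a' b'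
  proof (rule ccontr)
    have a': "a' \<in> grid n m" and b': "b' \<in> expvecs n"
      using that(1) by (auto simp: mult_conds_def expvecs_below_def)
    assume "pderiv_at n (a', b') (cond_witness n m a b) \<noteq> 0"
    then have "b' = b" "\<forall>i<n. a i \<le> a' i"
      using pderiv_at_cond_witness_neq_0D[OF a' _ b'] b rank
      by (auto simp: expvecs_below_def cond_rank_def)
    moreover have "(\<Sum>i<n. a' i) \<le> (\<Sum>i<n. a i)" using rank \<open>b' = b\<close> by (simp add: cond_rank_def)
    ultimately have "a = a'" using a a' grid_subset_expvecs by (intro expvecs_eq_if_le_sum_le) auto
    with \<open>b' = b\<close> that(2) show False by simp
  qed
  ultimately show ?thesis unfolding polys_supported_in_def by fastforce
qed

text \<open>For a top condition the witness has the non-reduced leading monomial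
  \<open>x ^ ((m + 1) * b + m)\<close>. It is cancelled by subtracting the product with exponents \<open>b i + 1\<close>
  at \<open>s > 0\<close>, which is monic of the same multidegree and kills the condition itself.\<close>
definition top_witness :: "nat \<Rightarrow> nat \<Rightarrow> (nat \<Rightarrow> nat) \<Rightarrow> rpoly" where
  "top_witness n m b =
    cond_witness n m (corner n m) b - grid_prod n m (\<lambda>i s. b i + (if 0 < s then 1 else 0))"

lemma supp_top_witness:
  assumes "k \<ge> 2" "b \<in> expvecs_deg n (k - 1)"
  shows "supp (top_witness n m b) \<subseteq> reduced_monos n m k"
proof -
  define top where "top = join_digits m (corner n m) b"
  define P1 where "P1 = cond_witness n m (corner n m) b"
  define P2 where "P2 = grid_prod n m (\<lambda>i s. b i + (if 0 < s then 1 else 0))"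
  have deg1: "\<forall>i<n. (\<Sum>s\<le>m. if s < corner n m i then 1 else 0) = corner n m i"
    by (simp add: corner_def sum_less_indicator)
  have deg2: "\<forall>i<n. (\<Sum>s\<le>m. if 0 < s then 1 else 0) = corner n m i"
    by (simp add: corner_def sum_positive_indicator)
  have "top \<in> expvecs n"
    using assms(2) by (simp add: top_def join_digits_def corner_def expvecs_def expvecs_deg_def)
  then have "P1 top = 1" "P2 top = 1"
    unfolding P1_def P2_def cond_witness_def top_def
    using grid_prod_shift_at_join_digits deg1 deg2 by simp_all
  then have "supp (top_witness n m b) \<subseteq> (supp P1 \<union> supp P2) - {top}"
    by (auto simp: top_witness_def P1_def P2_def supp_def)
  also have "\<dots> \<subseteq> exp_box n top - {top}"
    using supp_grid_prod_shift[OF deg1, of b] supp_grid_prod_shift[OF deg2, of b]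
    unfolding P1_def P2_def top_def cond_witness_def by blast
  also have "\<dots> \<subseteq> reduced_monos n m k"
    unfolding top_def by (rule exp_box_top_minus_subset_reduced_monos[OF assms])
  finally show ?thesis .
qed

lemma pderiv_at_top_witness_self:
  assumes "m \<ge> 1" "n \<ge> 1" "b \<in> expvecs n"
  shows "pderiv_at n (corner n m, b) (top_witness n m b) \<noteq> 0"
proof -
  have "pderiv_at n (corner n m, b) (grid_prod n m (\<lambda>i s. b i + (if 0 < s then 1 else 0))) = 0"
    using assms by (intro pderiv_at_grid_prod_eq_0[OF assms(3) corner_in_grid, of 0]) (auto simp: corner_def)
  then show ?thesis
    using pderiv_at_cond_witness_self[OF corner_in_grid assms(3)]
    by (simp add: top_witness_def cond_witness_def pderiv_at_diff finite_supp_grid_prod)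
qed

lemma pderiv_at_top_witness_eq_0:
  assumes "b \<in> expvecs n" "(\<Sum>i<n. b i) = k - 1"
    and "(a', b') \<in> mult_conds n m k" "(a', b') \<noteq> (corner n m, b)"
  shows "pderiv_at n (a', b') (top_witness n m b) = 0"
proof -
  have a': "a' \<in> grid n m" "a' \<noteq> (\<lambda>_. 0)" and b': "b' \<in> expvecs n" "(\<Sum>i<n. b' i) \<le> (\<Sum>i<n. b i)"
    using assms by (auto simp: mult_conds_def expvecs_below_def)
  have "pderiv_at n (a', b') (cond_witness n m (corner n m) b) = 0"
  proof (rule ccontr)
    assume "pderiv_at n (a', b') (cond_witness n m (corner n m) b) \<noteq> 0"
    then have "b' = b \<and> (\<forall>i<n. corner n m i \<le> a' i)"
      by (rule pderiv_at_cond_witness_neq_0D[OF a'(1) assms(1) b'])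
    then have "b' = b" "\<forall>i<n. m \<le> a' i" by (auto simp: corner_def)
    moreover have "a' = corner n m"
      using \<open>\<forall>i<n. m \<le> a' i\<close> a'(1) by (intro ext) (auto simp: corner_def grid_def intro: antisym)
    ultimately show False using assms(4) by simp
  qed
  moreover have "pderiv_at n (a', b') (grid_prod n m (\<lambda>i s. b i + (if 0 < s then 1 else 0))) = 0"
  proof (rule ccontr)
    assume "pderiv_at n (a', b') (grid_prod n m (\<lambda>i s. b i + (if 0 < s then 1 else 0))) \<noteq> 0"
    then have "b' = b \<and> (\<forall>i<n. (if 0 < a' i then 1 else 0 :: nat) = 0)"
      by (rule pderiv_at_grid_prod_shift_neq_0D[OF a'(1) assms(1) b'])
    then have "\<forall>i<n. a' i = 0" by (auto split: if_splits)
    then have "a' i = 0" for i using a'(1) by (cases "i < n") (auto simp: grid_def)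
    then have "a' = (\<lambda>_. 0)" by blast
    then show False using a'(2) by simp
  qed
  ultimately show ?thesis
    by (simp add: top_witness_def cond_witness_def pderiv_at_diff finite_supp_grid_prod)
qed

lemma mult_cond_top_witness:
  assumes "k \<ge> 2" "m \<ge> 1" "n \<ge> k - 1" and b: "b \<in> expvecs n" "(\<Sum>i<n. b i) = k - 1"
  shows "\<exists>w\<in>polys_supported_in (reduced_monos n m k). pderiv_at n (corner n m, b) w \<noteq> 0 \<and>
    (\<forall>c'\<in>mult_conds n m k. c' \<noteq> (corner n m, b) \<longrightarrow> pderiv_at n c' w = 0)"
proof -
  have "supp (top_witness n m b) \<subseteq> reduced_monos n m k"
    using b by (intro supp_top_witness[OF assms(1)]) (simp add: expvecs_deg_def)
  moreover have "pderiv_at n (corner n m, b) (top_witness n m b) \<noteq> 0"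
    using assms(1-3) b(1) by (intro pderiv_at_top_witness_self) auto
  moreover have "\<forall>c'\<in>mult_conds n m k. c' \<noteq> (corner n m, b) \<longrightarrow> pderiv_at n c' (top_witness n m b) = 0"
    using pderiv_at_top_witness_eq_0[OF b] by fast
  ultimately show ?thesis unfolding polys_supported_in_def by blast
qed

lemma mult_conds_triangular:
  assumes "k \<ge> 2" "m \<ge> 1" "n \<ge> k - 1" and c: "c \<in> mult_conds n m k"
  shows "\<exists>w\<in>polys_supported_in (reduced_monos n m k). pderiv_at n c w \<noteq> 0 \<and>
    (\<forall>c'\<in>mult_conds n m k. c' \<noteq> c \<and> cond_rank n c' \<le> cond_rank n c \<longrightarrow> pderiv_at n c' w = 0)"
proof -
  obtain a b where c_eq: "c = (a, b)" by (cases c)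
  show ?thesis
  proof (cases "a = corner n m \<and> (\<Sum>i<n. b i) = k - 1")
    case True
    then have "b \<in> expvecs n" using c by (simp add: c_eq mult_conds_def expvecs_below_def)
    then show ?thesis using mult_cond_top_witness[OF assms(1-3)] True unfolding c_eq by blast
  next
    case False
    then show ?thesis using mult_cond_witness[OF assms(1) c[unfolded c_eq]] unfolding c_eq by blast
  qed
qed

lemma dim_U_space_add_card_mult_conds:
  assumes "k \<ge> 2" "m \<ge> 1" "n \<ge> k - 1"
  shows "rpoly.dim (U_space n m k) + card (mult_conds n m k) = card (reduced_monos n m k)"
proof -
  let ?V = "polys_supported_in (reduced_monos n m k)"
  have fin: "finite (supp P)" if "P \<in> ?V" for P
    using that finite_subset[of "supp P" "reduced_monos n m k"] finite_reduced_monos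
    by (simp add: polys_supported_in_def)
  have "rpoly.dim {P \<in> ?V. \<forall>c\<in>mult_conds n m k. pderiv_at n c P = 0} + card (mult_conds n m k) =
      rpoly.dim ?V"
    by (rule rpoly.dim_common_kernel_add_card[where rank = "cond_rank n",
          OF subspace_polys_supported_in finite_imageI[OF finite_reduced_monos]
          polys_supported_in_subset_span[OF finite_reduced_monos] finite_mult_conds])
      (use fin pderiv_at_add pderiv_at_pscale mult_conds_triangular[OF assms] in auto)
  then show ?thesis by (simp add: U_space_eq dim_polys_supported_in[OF finite_reduced_monos])
qed

section \<open>The dimension of W\<close>

lemma dim_span_triangular:
  fixes g :: "'i \<Rightarrow> rpoly" and x :: "'i \<Rightarrow> nat \<Rightarrow> nat" and rank :: "'i \<Rightarrow> 'r::linorder"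
  assumes S: "finite S"
    and diag: "\<And>s. s \<in> S \<Longrightarrow> g s (x s) \<noteq> 0"
    and triangular: "\<And>s t. s \<in> S \<Longrightarrow> t \<in> S \<Longrightarrow> g t (x s) \<noteq> 0 \<Longrightarrow> t = s \<or> rank s < rank t"
  shows "rpoly.dim (rpoly.span (g ` S)) = card S"
proof -
  have inj: "inj_on g S"
  proof (rule inj_onI, rule ccontr)
    fix s t assume st: "s \<in> S" "t \<in> S" "g s = g t" "s \<noteq> t"
    have "g t (x s) \<noteq> 0" using diag[OF st(1)] st(3) by metis
    then have "rank s < rank t" using triangular[OF st(1,2)] st(4) by blast
    have "g s (x t) \<noteq> 0" using diag[OF st(2)] st(3) by metis
    then have "rank t < rank s" using triangular[OF st(2,1)] st(4) by blast
    with \<open>rank s < rank t\<close> show False by simp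
  qed
  have "rpoly.independent (g ` S)"
  proof
    assume "rpoly.dependent (g ` S)"
    then obtain u v where "v \<in> g ` S" "u v \<noteq> 0" and "(\<Sum>v\<in>g ` S. pscale (u v) v) = 0"
      using rpoly.dependent_finite[OF finite_imageI[OF S]] by blast
    then have sum0: "(\<Sum>s\<in>S. pscale (u (g s)) (g s)) = 0"
      by (simp add: sum.reindex[OF inj])
    define Z where "Z = {s\<in>S. u (g s) \<noteq> 0}"
    have "finite Z" "Z \<noteq> {}"
      using S \<open>v \<in> g ` S\<close> \<open>u v \<noteq> 0\<close> by (auto simp: Z_def)
    then have "Max (rank ` Z) \<in> rank ` Z" by simp
    then obtain s0 where s0: "s0 \<in> Z" "rank s0 = Max (rank ` Z)" by (metis imageE)
    then have s0_max: "rank s \<le> rank s0" if "s \<in> Z" for s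
      using \<open>finite Z\<close> that by simp
    have "s0 \<in> S" "u (g s0) \<noteq> 0" using s0(1) by (simp_all add: Z_def)
    have "(\<Sum>s\<in>S - {s0}. u (g s) * g s (x s0)) = 0"
    proof (rule sum.neutral, rule ballI, rule ccontr)
      fix s assume s: "s \<in> S - {s0}" and "u (g s) * g s (x s0) \<noteq> 0"
      then have "rank s \<le> rank s0" "rank s0 < rank s"
        using s0_max triangular[OF \<open>s0 \<in> S\<close>, of s] by (auto simp: Z_def)
      then show False by simp
    qed
    then have "(\<Sum>s\<in>S. pscale (u (g s)) (g s)) (x s0) = u (g s0) * g s0 (x s0)"
      by (simp add: sum_rpoly_apply sum.remove[OF S \<open>s0 \<in> S\<close>])
    then show False using sum0 \<open>u (g s0) \<noteq> 0\<close> diag[OF \<open>s0 \<in> S\<close>] by simp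
  qed
  then show ?thesis
    using rpoly.dim_span_eq_card_independent card_image[OF inj] by simp
qed

definition W_exponent :: "nat \<Rightarrow> nat \<Rightarrow> nat \<Rightarrow> (nat \<Rightarrow> nat) \<Rightarrow> nat \<Rightarrow> nat \<Rightarrow> nat" where
  "W_exponent n m d l j = (\<lambda>i. if i < n then m + (m + 1) * l i + (if i = j then d else 0) else 0)"

lemma W_gen_eq: "W_gen n m d l = (\<lambda>\<alpha>. \<Sum>j<n. if \<alpha> = W_exponent n m d l j then 1 else 0)"
  by (simp add: W_gen_def W_exponent_def)

lemma W_gen_neq_0D: "W_gen n m d l \<alpha> \<noteq> 0 \<Longrightarrow> \<exists>j<n. \<alpha> = W_exponent n m d l j"
  by (auto simp: W_gen_eq intro: ccontr)

lemma W_gen_at_exponent: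
  assumes "j < n"
  shows "W_gen n m d l (W_exponent n m d l j) \<noteq> 0"
proof -
  have "(\<Sum>j'<n. if W_exponent n m d l j = W_exponent n m d l j' then 1 else 0 :: real) \<noteq> 0"
    using assms by (subst sum_nonneg_eq_0_iff) auto
  then show ?thesis by (simp add: W_gen_eq)
qed

text \<open>For \<open>m \<ge> 1\<close> and \<open>d mod (m + 1) = m\<close>, coordinate \<open>j\<close> is the only one whose residue
  modulo \<open>m + 1\<close> is not \<open>m\<close>; so \<open>j\<close>, and \<open>l\<close> away from \<open>j\<close>, can be read off the exponent.\<close>
lemma W_exponent_eq_imp:
  assumes "m \<ge> 1" "d mod (m + 1) = m" "d' mod (m + 1) = m" "j < n" "j' < n"
    and eq: "W_exponent n m d l j = W_exponent n m d' l' j'"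
  shows "j = j' \<and> (\<forall>i<n. i \<noteq> j \<longrightarrow> l i = l' i)"
proof -
  have residue: "W_exponent n m e q j0 i mod (m + 1) = (if i = j0 then m - 1 else m)"
    if e: "e mod (m + 1) = m" and i: "i < n" for e q j0 i
  proof -
    obtain e' where "e = (m + 1) * e' + m" using e by (metis mult_div_mod_eq)
    then have "W_exponent n m e q j0 i =
        (m + 1) * (q i + (if i = j0 then e' else 0)) + (if i = j0 then m + m else m)"
      using i by (simp add: W_exponent_def algebra_simps)
    moreover have "(m + m) mod (m + 1) = m - 1" using assms(1) by (simp add: mod_if)
    ultimately show ?thesis by (simp only: mod_mult_self4) simp
  qed
  have "j = j'"
  proof (rule ccontr)
    assume "j \<noteq> j'"
    then have "W_exponent n m d l j j mod (m + 1) \<noteq> W_exponent n m d' l' j' j mod (m + 1)"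
      using residue[OF assms(2) assms(4)] residue[OF assms(3) assms(4)] assms(1) by simp
    then show False using eq by simp
  qed
  moreover have "l i = l' i" if "i < n" "i \<noteq> j" for i
  proof -
    have "(m + 1) * l i = (m + 1) * l' i"
      using fun_cong[OF eq, of i] that \<open>j = j'\<close> by (simp add: W_exponent_def)
    then show ?thesis by (simp only: mult_cancel1) simp
  qed
  ultimately show ?thesis by blast
qed

definition W_shift :: "nat \<Rightarrow> nat \<Rightarrow> nat \<Rightarrow> (nat \<Rightarrow> nat) \<Rightarrow> nat" where
  "W_shift n m k l = (m + 1) * (k - 1) - 1 - (m + 1) * (\<Sum>i<n. l i)"

lemma W_shift_mod:
  assumes "l \<in> expvecs_below n (k - 1)"
  shows "W_shift n m k l mod (m + 1) = m"
proof -
  obtain t where t: "k - 1 = (\<Sum>i<n. l i) + Suc t"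
    using assms by (auto simp: expvecs_below_def dest: less_imp_Suc_add)
  have "W_shift n m k l = (m + 1) * t + m"
    unfolding W_shift_def t by (simp add: algebra_simps)
  then show ?thesis by (simp only: mod_mult_self4) simp
qed

lemma W_space_eq_span:
  assumes "k \<ge> 2"
  shows "W_space n m k = rpoly.span ((\<lambda>l. W_gen n m (W_shift n m k l) l) ` expvecs_below n (k - 1))"
proof -
  have gen_iff: "l \<in> expvecs n \<and> d + (m + 1) * (\<Sum>i<n. l i) = (m + 1) * (k - 1) - 1 \<longleftrightarrow>
      l \<in> expvecs_below n (k - 1) \<and> d = W_shift n m k l" for d l
  proof -
    have "(m + 1) * (k - 1) \<ge> 1" using assms by simp
    moreover have "(m + 1) * (\<Sum>i<n. l i) < (m + 1) * (k - 1) \<longleftrightarrow> (\<Sum>i<n. l i) < k - 1"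
      by (simp only: mult_less_cancel1) simp
    ultimately show ?thesis by (auto simp: expvecs_below_def W_shift_def)
  qed
  have "{W_gen n m d l | d l. l \<in> expvecs n \<and> d + (m + 1) * (\<Sum>i<n. l i) = (m + 1) * (k - 1) - 1} =
      (\<lambda>l. W_gen n m (W_shift n m k l) l) ` expvecs_below n (k - 1)"
  proof (intro equalityI subsetI)
    fix P
    assume "P \<in> {W_gen n m d l | d l.
      l \<in> expvecs n \<and> d + (m + 1) * (\<Sum>i<n. l i) = (m + 1) * (k - 1) - 1}"
    then obtain d l where "P = W_gen n m d l" "l \<in> expvecs_below n (k - 1)" "d = W_shift n m k l"
      using gen_iff by blast
    then show "P \<in> (\<lambda>l. W_gen n m (W_shift n m k l) l) ` expvecs_below n (k - 1)" by simp
  next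
    fix P assume "P \<in> (\<lambda>l. W_gen n m (W_shift n m k l) l) ` expvecs_below n (k - 1)"
    then obtain l where "l \<in> expvecs_below n (k - 1)" "P = W_gen n m (W_shift n m k l) l" by blast
    then show "P \<in> {W_gen n m d l | d l.
      l \<in> expvecs n \<and> d + (m + 1) * (\<Sum>i<n. l i) = (m + 1) * (k - 1) - 1}"
      using gen_iff[of l "W_shift n m k l"] by blast
  qed
  then show ?thesis by (simp add: W_space_def)
qed

lemma expvecs_below_has_zero:
  assumes "l \<in> expvecs_below n d" "d \<le> n"
  shows "\<exists>j<n. l j = 0"
proof (rule ccontr)
  assume "\<not> (\<exists>j<n. l j = 0)"
  then have "(\<Sum>j<n. 1) \<le> (\<Sum>j<n. l j)" by (intro sum_mono) (simp add: Suc_le_eq)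
  then show False using assms by (simp add: expvecs_below_def)
qed

lemma dim_W_space:
  assumes "k \<ge> 2" "m \<ge> 1" "n \<ge> k - 1"
  shows "rpoly.dim (W_space n m k) = card (expvecs_below n (k - 1))"
  unfolding W_space_eq_span[OF assms(1)]
proof (rule dim_span_triangular[OF finite_expvecs_below])
  define j where "j l = (SOME j. j < n \<and> l j = 0)" for l :: "nat \<Rightarrow> nat"
  have j: "j l < n" "l (j l) = 0" if "l \<in> expvecs_below n (k - 1)" for l
    using someI_ex[OF expvecs_below_has_zero[OF that assms(3)]] by (simp_all add: j_def)
  let ?x = "\<lambda>l. W_exponent n m (W_shift n m k l) l (j l)"
  show "W_gen n m (W_shift n m k l) l (?x l) \<noteq> 0" if "l \<in> expvecs_below n (k - 1)" for l
    using W_gen_at_exponent[OF j(1)[OF that]] .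
  show "l' = l \<or> (\<Sum>i<n. l i) < (\<Sum>i<n. l' i)"
    if l: "l \<in> expvecs_below n (k - 1)" and l': "l' \<in> expvecs_below n (k - 1)"
      and "W_gen n m (W_shift n m k l') l' (?x l) \<noteq> 0" for l l'
  proof -
    obtain j' where "j' < n" "?x l = W_exponent n m (W_shift n m k l') l' j'"
      using W_gen_neq_0D \<open>W_gen n m (W_shift n m k l') l' (?x l) \<noteq> 0\<close> by blast
    then have "\<forall>i<n. i \<noteq> j l \<longrightarrow> l i = l' i"
      using W_exponent_eq_imp[OF assms(2) W_shift_mod[OF l] W_shift_mod[OF l'] j(1)[OF l]] by blast
    then have le: "\<forall>i<n. l i \<le> l' i" using j(2)[OF l] by (metis le_refl zero_le)
    show ?thesis
    proof (cases "(\<Sum>i<n. l' i) \<le> (\<Sum>i<n. l i)")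
      case True
      then show ?thesis
        using expvecs_eq_if_le_sum_le[OF _ _ le] l l' by (auto simp: expvecs_below_def)
    qed simp
  qed
qed

theorem lemma4p4:
  fixes n m k :: nat
  assumes "m \<ge> 1" and "k \<ge> 2" and "n \<ge> k - 1"
  shows "vector_space.dim pscale (W_space n m k) = vector_space.dim pscale (U_space n m k)"
proof -
  have "rpoly.dim (U_space n m k) + card (mult_conds n m k) = card (reduced_monos n m k)"
    using dim_U_space_add_card_mult_conds[OF assms(2,1,3)] .
  then have "rpoly.dim (U_space n m k) = card (expvecs_below n (k - 1))"
    using card_reduced_monos[OF assms(2)] card_mult_conds by simp
  then show ?thesis using dim_W_space[OF assms(2,1,3)] by simp
qed

end
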